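(* Let $\Gamma=(\mathcal{A},\Theta,p,c)$ be a basic game that is a potential game whose potential $\Phi_\theta$ is convex for every $\theta$, and let $\mathcal{I}=(\gamma,\mathcal{T},\pi)$ be an information structure. Define, for interim flow profiles $\hat y$, $\Phi_\pi(\hat y)=\sum_{\theta\in\Theta}\sum_{\tau\in\mathcal{T}}p(\theta)\pi(\tau\mid\theta)\Phi_\theta(y(\tau))$. Then for every $\alpha>0$, every Bayesian Wardrop $\alpha$-equilibrium $\hat y$ of $(\Gamma,\mathcal{I})$ satisfies $\Phi_\pi(\hat y)\le\min_{\hat z}\Phi_\pi(\hat z)+\alpha$, where the minimum is over all interim flow profiles $\hat z$.
   Context: Basic game: $\Gamma=(\mathcal{A},\Theta,p,c)$ with $\mathcal{A}$ a finite set of actions, $\Theta$ a finite set of states, $p\in\Delta(\Theta)$ a full-support prior, and $c=(c_a)_{a\in\mathcal{A}}$ with each $c_a:\mathcal{Y}\times\Theta\to\mathbb{R}$ continuous, where $\mathcal{Y}=\Delta(\mathcal{A})=\{y\in\mathbb{R}^{\mathcal{A}}_{\ge0}:\sum_a y_a=1\}$. For $\gamma>0$, $\Delta_\gamma(\mathcal{A})=\{y\in\mathbb{R}^{\mathcal{A}}_{\ge0}:\sum_a y_a=\gamma\}$. $\Gamma$ is a potential game if for each $\theta$ there is an open set $\widetilde{\mathcal{Y}}\supseteq\mathcal{Y}$ in $\mathbb{R}^{\mathcal{A}}$ and a continuously differentiable $\Phi_\theta:\widetilde{\mathcal{Y}}\to\mathbb{R}$ with $\partial\Phi_\theta(y)/\partial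 y_a=c_a(y,\theta)$ for all $a$ and $y\in\mathcal{Y}$. Information structure: $\mathcal{I}=(\gamma,\mathcal{T},\pi)$ consisting of a finite set $\mathcal{K}$ of populations with sizes $\gamma^k>0$, $\sum_k\gamma^k=1$; finite type sets $\mathcal{T}^k$, $\mathcal{T}=\prod_k\mathcal{T}^k$; and $\pi:\Theta\to\Delta(\mathcal{T})$. An interim flow profile is $\hat y=(y^k(\tau^k))_{k,\tau^k}$ with $y^k(\tau^k)\in\Delta_{\gamma^k}(\mathcal{A})$; total flow $y(\tau)=\sum_k y^k(\tau^k)$. Let $P(\tau^k)=\sum_\theta\sum_{\tau^{-k}}p(\theta)\pi(\tau^k,\tau^{-k}\mid\theta)$. For $\varepsilon\ge0$, $\hat y$ is a Bayesian Wardrop $\varepsilon$-equilibrium of $(\Gamma,\mathcal{I})$ if for all $k$, all $\tau^k$ with $P(\tau^k)>0$ and all $a,b$ with $y^k_a(\tau^k)>0$: $\sum_\theta\sum_{\tau^{-k}}p(\theta)\pi(\tau^k,\tau^{-k}\mid\theta)c_a(y(\tau),\theta)\le\sum_\theta\sum_{\tau^{-k}}p(\theta)\pi(\tau^k,\tau^{-k}\mid\theta)c_b(y(\tau),\theta)+\varepsilon P(\tau^k)$. *)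

theory Defs
  imports "HOL-Analysis.Analysis"
begin

definition simplex_mass :: "real \<Rightarrow> (real ^ 'a::finite) set" where
  "simplex_mass g = {y. (\<forall>a. 0 \<le> y $ a) \<and> (\<Sum>a\<in>UNIV. y $ a) = g}"

definition basic_game :: "('s::finite \<Rightarrow> real) \<Rightarrow> ('a::finite \<Rightarrow> real ^ 'a \<Rightarrow> 's \<Rightarrow> real) \<Rightarrow> bool" where
  "basic_game p c \<longleftrightarrow> (\<forall>\<theta>. 0 < p \<theta>) \<and> (\<Sum>\<theta>\<in>UNIV. p \<theta>) = 1 \<and>
     (\<forall>a \<theta>. continuous_on (simplex_mass 1) (\<lambda>y. c a y \<theta>))"

definition is_potential :: "('a::finite \<Rightarrow> real ^ 'a \<Rightarrow> 's \<Rightarrow> real) \<Rightarrow> ('s \<Rightarrow> real ^ 'a \<Rightarrow> real) \<Rightarrow> bool" where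
  "is_potential c \<Phi> \<longleftrightarrow> (\<forall>\<theta>. \<exists>U DPhi. open U \<and> simplex_mass 1 \<subseteq> U \<and>
      (\<forall>y\<in>U. (\<Phi> \<theta> has_derivative (\<lambda>h. DPhi y \<bullet> h)) (at y)) \<and>
      continuous_on U DPhi \<and>
      (\<forall>y\<in>simplex_mass 1. \<forall>a. DPhi y $ a = c a y \<theta>))"

definition info_structure :: "('k::finite \<Rightarrow> real) \<Rightarrow> ('k \<Rightarrow> 't set) \<Rightarrow> ('s \<Rightarrow> ('k \<Rightarrow> 't) \<Rightarrow> real) \<Rightarrow> bool" where
  "info_structure \<gamma> T \<pi> \<longleftrightarrow> (\<forall>k. 0 < \<gamma> k) \<and> (\<Sum>k\<in>UNIV. \<gamma> k) = 1 \<and> (\<forall>k. finite (T k)) \<and>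
     (\<forall>\<theta>. (\<forall>\<tau>\<in>PiE UNIV T. 0 \<le> \<pi> \<theta> \<tau>) \<and> (\<Sum>\<tau>\<in>PiE UNIV T. \<pi> \<theta> \<tau>) = 1)"

definition interim_profile :: "('k \<Rightarrow> real) \<Rightarrow> ('k \<Rightarrow> 't set) \<Rightarrow> ('k \<Rightarrow> 't \<Rightarrow> real ^ 'a::finite) \<Rightarrow> bool" where
  "interim_profile \<gamma> T yh \<longleftrightarrow> (\<forall>k. \<forall>t\<in>T k. yh k t \<in> simplex_mass (\<gamma> k))"

definition total_flow :: "('k::finite \<Rightarrow> 't \<Rightarrow> real ^ 'a::finite) \<Rightarrow> ('k \<Rightarrow> 't) \<Rightarrow> real ^ 'a" where
  "total_flow yh \<tau> = (\<Sum>k\<in>UNIV. yh k (\<tau> k))"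

text \<open>P(\<tau>^k): the sum over \<tau>^{-k} is rendered as a sum over full profiles with k-th entry t.\<close>
definition type_prob :: "('s::finite \<Rightarrow> real) \<Rightarrow> ('k \<Rightarrow> 't set) \<Rightarrow> ('s \<Rightarrow> ('k \<Rightarrow> 't) \<Rightarrow> real) \<Rightarrow> 'k \<Rightarrow> 't \<Rightarrow> real" where
  "type_prob p T \<pi> k t = (\<Sum>\<theta>\<in>UNIV. \<Sum>\<tau>\<in>{\<tau>\<in>PiE UNIV T. \<tau> k = t}. p \<theta> * \<pi> \<theta> \<tau>)"

definition interim_cost :: "('s::finite \<Rightarrow> real) \<Rightarrow> ('a::finite \<Rightarrow> real ^ 'a \<Rightarrow> 's \<Rightarrow> real) \<Rightarrow>
    ('k::finite \<Rightarrow> 't set) \<Rightarrow> ('s \<Rightarrow> ('k \<Rightarrow> 't) \<Rightarrow> real) \<Rightarrow> ('k \<Rightarrow> 't \<Rightarrow> real ^ 'a) \<Rightarrow> 'k \<Rightarrow> 't \<Rightarrow> 'a \<Rightarrow> real" where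
  "interim_cost p c T \<pi> yh k t a =
     (\<Sum>\<theta>\<in>UNIV. \<Sum>\<tau>\<in>{\<tau>\<in>PiE UNIV T. \<tau> k = t}. p \<theta> * \<pi> \<theta> \<tau> * c a (total_flow yh \<tau>) \<theta>)"

definition bayes_wardrop_eq ::
  "('s::finite \<Rightarrow> real) \<Rightarrow> ('a::finite \<Rightarrow> real ^ 'a \<Rightarrow> 's \<Rightarrow> real) \<Rightarrow> ('k::finite \<Rightarrow> real) \<Rightarrow>
   ('k \<Rightarrow> 't set) \<Rightarrow> ('s \<Rightarrow> ('k \<Rightarrow> 't) \<Rightarrow> real) \<Rightarrow> real \<Rightarrow> ('k \<Rightarrow> 't \<Rightarrow> real ^ 'a) \<Rightarrow> bool" where
  "bayes_wardrop_eq p c \<gamma> T \<pi> \<epsilon> yh \<longleftrightarrow> interim_profile \<gamma> T yh \<and>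
     (\<forall>k. \<forall>t\<in>T k. type_prob p T \<pi> k t > 0 \<longrightarrow>
        (\<forall>a b. yh k t $ a > 0 \<longrightarrow>
           interim_cost p c T \<pi> yh k t a \<le> interim_cost p c T \<pi> yh k t b + \<epsilon> * type_prob p T \<pi> k t))"

definition Phi_pi :: "('s::finite \<Rightarrow> real) \<Rightarrow> ('k::finite \<Rightarrow> 't set) \<Rightarrow> ('s \<Rightarrow> ('k \<Rightarrow> 't) \<Rightarrow> real) \<Rightarrow>
    ('s \<Rightarrow> real ^ 'a::finite \<Rightarrow> real) \<Rightarrow> ('k \<Rightarrow> 't \<Rightarrow> real ^ 'a) \<Rightarrow> real" where
  "Phi_pi p T \<pi> \<Phi> yh = (\<Sum>\<theta>\<in>UNIV. \<Sum>\<tau>\<in>PiE UNIV T. p \<theta> * \<pi> \<theta> \<tau> * \<Phi> \<theta> (total_flow yh \<tau>))"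

end

theory Submission
  imports Defs
begin

text \<open>For total flows \<open>Y, Z\<close>, convexity of \<open>\<Phi>\<^sub>\<theta>\<close> gives
  \<open>\<Phi>\<^sub>\<theta>(Y) - \<Phi>\<^sub>\<theta>(Z) \<le> \<nabla>\<Phi>\<^sub>\<theta>(Y)\<cdot>(Y - Z) = \<Sum>\<^sub>a c\<^sub>a(Y,\<theta>) (Y\<^sub>a - Z\<^sub>a)\<close>.
  Averaging over states and type profiles and regrouping by population \<open>k\<close> and type \<open>t\<close>
  bounds \<open>\<Phi>\<^sub>\<pi>(y) - \<Phi>\<^sub>\<pi>(z)\<close> by \<open>\<Sum>\<^sub>k \<Sum>\<^sub>t \<Sum>\<^sub>a (y\<^sup>k\<^sub>a(t) - z\<^sup>k\<^sub>a(t)) C\<^sup>k\<^sub>a(t)\<close>,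
  where \<open>C\<close> are the (unnormalised) interim costs. Both \<open>y\<^sup>k(t)\<close> and \<open>z\<^sup>k(t)\<close> have mass
  \<open>\<gamma>\<^sup>k\<close> and \<open>y\<^sup>k(t)\<close> only uses actions within \<open>\<alpha> P(t)\<close> of the cheapest one, so the
  inner sum is at most \<open>\<gamma>\<^sup>k \<alpha> P(t)\<close>; since the \<open>P(t)\<close> sum to one over the types of
  each population and the \<open>\<gamma>\<^sup>k\<close> sum to one, the total is \<open>\<alpha>\<close>.\<close>

text \<open>Unlike \<open>convex_on_imp_above_tangent\<close> this needs no interior point: the simplex
  has empty interior in \<open>\<real>\<^sup>A\<close>, but the derivative is taken in the ambient space.\<close>

lemma convex_on_imp_above_linearization:
  fixes f :: "'v::real_normed_vector \<Rightarrow> real"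
  assumes convex: "convex_on S f" and y: "y \<in> S" and z: "z \<in> S"
    and deriv: "(f has_derivative f') (at y)"
  shows "f' (z - y) \<le> f z - f y"
proof -
  define g where "g s = f (y + s *\<^sub>R (z - y))" for s :: real
  have "((\<lambda>s. y + s *\<^sub>R (z - y)) has_derivative (\<lambda>s. s *\<^sub>R (z - y))) (at 0)"
    by (auto intro!: derivative_eq_intros)
  from diff_chain_at[OF this] deriv
  have "(g has_derivative (\<lambda>s. f' (s *\<^sub>R (z - y)))) (at 0)"
    unfolding g_def[abs_def] by (simp add: o_def)
  moreover have "f' (s *\<^sub>R (z - y)) = f' (z - y) * s" for s
    using has_derivative_bounded_linear[OF deriv] by (simp add: linear_simps)
  ultimately have "(g has_field_derivative f' (z - y)) (at 0 within {0<..})"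
    unfolding has_field_derivative_def by (auto intro: has_derivative_at_withinI)
  hence "((\<lambda>s. (g s - g 0) / (s - 0)) \<longlongrightarrow> f' (z - y)) (at_right 0)"
    by (simp add: has_field_derivative_iff)
  moreover have "eventually (\<lambda>s. (g s - g 0) / (s - 0) \<le> f z - f y) (at_right 0)"
    using eventually_at_right_real[OF zero_less_one]
  proof eventually_elim
    case (elim s)
    have "g s = f ((1 - s) *\<^sub>R y + s *\<^sub>R z)"
      by (simp add: g_def algebra_simps)
    also have "\<dots> \<le> (1 - s) * f y + s * f z"
      using convex_onD[OF convex, of s y z] elim y z by simp
    finally show ?case
      using elim by (simp add: g_def field_simps)
  qed
  ultimately show ?thesis
    by (rule tendsto_upperbound) auto
qed

lemma simplex_mass_sum:
  fixes y :: "'k \<Rightarrow> real ^ 'a::finite"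
  assumes "finite K" and "\<And>k. k \<in> K \<Longrightarrow> y k \<in> simplex_mass (g k)"
  shows "(\<Sum>k\<in>K. y k) \<in> simplex_mass (\<Sum>k\<in>K. g k)"
proof -
  have "(\<Sum>a\<in>UNIV. (\<Sum>k\<in>K. y k) $ a) = (\<Sum>k\<in>K. \<Sum>a\<in>UNIV. y k $ a)"
    unfolding sum_component by (rule sum.swap)
  also have "\<dots> = (\<Sum>k\<in>K. g k)"
    using assms(2) by (simp add: simplex_mass_def)
  finally show ?thesis
    using assms(2) by (auto simp: simplex_mass_def intro!: sum_nonneg)
qed

lemma total_flow_in_simplex:
  assumes "info_structure \<gamma> T \<pi>" and "interim_profile \<gamma> T yh" and "\<tau> \<in> PiE UNIV T"
  shows "total_flow yh \<tau> \<in> simplex_mass 1"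
proof -
  have "(\<Sum>k\<in>UNIV. yh k (\<tau> k)) \<in> simplex_mass (\<Sum>k\<in>UNIV. \<gamma> k)"
    using assms(2,3) by (intro simplex_mass_sum) (auto simp: interim_profile_def PiE_iff)
  with assms(1) show ?thesis
    by (simp add: total_flow_def info_structure_def)
qed

lemma potential_above_linearization:
  assumes "is_potential c \<Phi>" and "convex_on (simplex_mass 1) (\<Phi> \<theta>)"
    and Y: "Y \<in> simplex_mass 1" and Z: "Z \<in> simplex_mass 1"
  shows "\<Phi> \<theta> Y - \<Phi> \<theta> Z \<le> (\<Sum>a\<in>UNIV. c a Y \<theta> * (Y $ a - Z $ a))"
proof -
  obtain U DPhi where "simplex_mass 1 \<subseteq> U"
    and "\<forall>y\<in>U. (\<Phi> \<theta> has_derivative (\<lambda>h. DPhi y \<bullet> h)) (at y)"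
    and grad: "\<forall>y\<in>simplex_mass 1. \<forall>a. DPhi y $ a = c a y \<theta>"
    using assms(1) unfolding is_potential_def by metis
  with Y have "(\<Phi> \<theta> has_derivative (\<lambda>h. DPhi Y \<bullet> h)) (at Y)"
    by blast
  from convex_on_imp_above_linearization[OF assms(2) Y Z this]
  have "\<Phi> \<theta> Y - \<Phi> \<theta> Z \<le> DPhi Y \<bullet> (Y - Z)"
    by (simp add: inner_diff_right)
  also have "\<dots> = (\<Sum>a\<in>UNIV. c a Y \<theta> * (Y $ a - Z $ a))"
    using grad Y by (simp add: inner_vec_def)
  finally show ?thesis .
qed

lemma sum_group_by_component:
  assumes "finite A" and "finite S" and "\<And>\<tau>. \<tau> \<in> A \<Longrightarrow> \<tau> k \<in> S"
  shows "(\<Sum>\<tau>\<in>A. g \<tau> (\<tau> k)) = (\<Sum>t\<in>S. \<Sum>\<tau>\<in>{\<tau>\<in>A. \<tau> k = t}. g \<tau> t)"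
proof -
  have "(\<Sum>\<tau>\<in>A. g \<tau> (\<tau> k)) = (\<Sum>t\<in>S. \<Sum>\<tau>\<in>{\<tau>\<in>A. \<tau> k = t}. g \<tau> (\<tau> k))"
    using assms by (intro sum.group[symmetric]) auto
  also have "\<dots> = (\<Sum>t\<in>S. \<Sum>\<tau>\<in>{\<tau>\<in>A. \<tau> k = t}. g \<tau> t)"
    by (intro sum.cong refl) auto
  finally show ?thesis .
qed

lemma sum_PiE_regroup_by_type:
  fixes g :: "'s::finite \<Rightarrow> ('k::finite \<Rightarrow> 't) \<Rightarrow> 'k \<Rightarrow> 't \<Rightarrow> real"
  assumes "\<And>k. finite (T k)"
  shows "(\<Sum>\<theta>\<in>UNIV. \<Sum>\<tau>\<in>PiE UNIV T. \<Sum>k\<in>UNIV. g \<theta> \<tau> k (\<tau> k)) =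
    (\<Sum>k\<in>UNIV. \<Sum>t\<in>T k. \<Sum>\<theta>\<in>UNIV. \<Sum>\<tau>\<in>{\<tau>\<in>PiE UNIV T. \<tau> k = t}. g \<theta> \<tau> k t)"
proof -
  have fin: "finite (PiE UNIV T)"
    using assms by (intro finite_PiE) auto
  have "(\<Sum>\<theta>\<in>UNIV. \<Sum>\<tau>\<in>PiE UNIV T. \<Sum>k\<in>UNIV. g \<theta> \<tau> k (\<tau> k)) =
      (\<Sum>\<theta>\<in>UNIV. \<Sum>k\<in>UNIV. \<Sum>\<tau>\<in>PiE UNIV T. g \<theta> \<tau> k (\<tau> k))"
    by (intro sum.cong refl sum.swap)
  also have "\<dots> = (\<Sum>k\<in>UNIV. \<Sum>\<theta>\<in>UNIV. \<Sum>\<tau>\<in>PiE UNIV T. g \<theta> \<tau> k (\<tau> k))"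
    by (rule sum.swap)
  also have "\<dots> = (\<Sum>k\<in>UNIV. \<Sum>\<theta>\<in>UNIV. \<Sum>t\<in>T k. \<Sum>\<tau>\<in>{\<tau>\<in>PiE UNIV T. \<tau> k = t}. g \<theta> \<tau> k t)"
    using fin assms by (intro sum.cong refl sum_group_by_component) auto
  also have "\<dots> = (\<Sum>k\<in>UNIV. \<Sum>t\<in>T k. \<Sum>\<theta>\<in>UNIV. \<Sum>\<tau>\<in>{\<tau>\<in>PiE UNIV T. \<tau> k = t}. g \<theta> \<tau> k t)"
    by (intro sum.cong refl sum.swap)
  finally show ?thesis .
qed

lemma prior_weight_nonneg:
  assumes "basic_game p c" and "info_structure \<gamma> T \<pi>" and "\<tau> \<in> PiE UNIV T"
  shows "0 \<le> p \<theta> * \<pi> \<theta> \<tau>"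
  using assms by (auto simp: basic_game_def info_structure_def less_imp_le)

lemma type_prob_nonneg:
  assumes "basic_game p c" and "info_structure \<gamma> T \<pi>"
  shows "0 \<le> type_prob p T \<pi> k t"
  unfolding type_prob_def using prior_weight_nonneg[OF assms] by (intro sum_nonneg) auto

lemma interim_cost_eq_0_if_type_prob_eq_0:
  assumes game: "basic_game p c" and info: "info_structure \<gamma> T \<pi>"
    and P0: "type_prob p T \<pi> k t = 0"
  shows "interim_cost p c T \<pi> yh k t a = 0"
proof -
  define A where "A = {\<tau>\<in>PiE UNIV T. \<tau> k = t}"
  have "finite (PiE UNIV T)"
    using info by (auto simp: info_structure_def intro!: finite_PiE)
  then have "finite A"
    by (simp add: A_def)
  have nonneg: "\<tau> \<in> A \<Longrightarrow> 0 \<le> p \<theta> * \<pi> \<theta> \<tau>" for \<theta> \<tau>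
    using prior_weight_nonneg[OF game info] by (simp add: A_def)
  have inner_nonneg: "0 \<le> (\<Sum>\<tau>\<in>A. p \<theta> * \<pi> \<theta> \<tau>)" for \<theta>
    using nonneg by (intro sum_nonneg) auto
  have "(\<Sum>\<theta>\<in>UNIV. \<Sum>\<tau>\<in>A. p \<theta> * \<pi> \<theta> \<tau>) = 0"
    using P0 by (simp add: type_prob_def A_def)
  then have "(\<Sum>\<tau>\<in>A. p \<theta> * \<pi> \<theta> \<tau>) = 0" for \<theta>
    using inner_nonneg by (simp add: sum_nonneg_eq_0_iff)
  then have "p \<theta> * \<pi> \<theta> \<tau> = 0" if "\<tau> \<in> A" for \<theta> \<tau>
    using that nonneg \<open>finite A\<close> by (auto simp: sum_nonneg_eq_0_iff)
  then show ?thesis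
    unfolding interim_cost_def A_def[symmetric] by (intro sum.neutral ballI) simp
qed

lemma sum_type_prob:
  assumes game: "basic_game p c" and info: "info_structure \<gamma> T \<pi>"
  shows "(\<Sum>t\<in>T k. type_prob p T \<pi> k t) = 1"
proof -
  have fin: "finite (T k)" "finite (PiE UNIV T)"
    using info by (auto simp: info_structure_def intro!: finite_PiE)
  have "(\<Sum>t\<in>T k. type_prob p T \<pi> k t) =
      (\<Sum>\<theta>\<in>UNIV. \<Sum>t\<in>T k. \<Sum>\<tau>\<in>{\<tau>\<in>PiE UNIV T. \<tau> k = t}. p \<theta> * \<pi> \<theta> \<tau>)"
    unfolding type_prob_def by (rule sum.swap)
  also have "\<dots> = (\<Sum>\<theta>\<in>UNIV. \<Sum>\<tau>\<in>PiE UNIV T. p \<theta> * \<pi> \<theta> \<tau>)"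
    using fin by (intro sum.cong refl sum_group_by_component[symmetric]) auto
  also have "\<dots> = (\<Sum>\<theta>\<in>UNIV. p \<theta>)"
    using info by (simp add: info_structure_def sum_distrib_left[symmetric])
  also have "\<dots> = 1"
    using game by (simp add: basic_game_def)
  finally show ?thesis .
qed

lemma simplex_mass_cost_gap_le:
  fixes y z :: "real ^ 'a::finite" and C :: "'a \<Rightarrow> real"
  assumes y: "y \<in> simplex_mass g" and z: "z \<in> simplex_mass g"
    and near_min: "\<And>a b. y $ a > 0 \<Longrightarrow> C a \<le> C b + e"
  shows "(\<Sum>a\<in>UNIV. (y $ a - z $ a) * C a) \<le> g * e"
proof -
  have "Min (range C) \<in> range C"
    by (rule Min_in) auto
  then obtain b where "C b = Min (range C)"
    by (metis imageE)
  then have b: "C b \<le> C a" for a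
    by simp
  have "(\<Sum>a\<in>UNIV. y $ a * C a) \<le> (\<Sum>a\<in>UNIV. y $ a * (C b + e))"
  proof (rule sum_mono)
    fix a
    have "0 \<le> y $ a"
      using y by (simp add: simplex_mass_def)
    then consider "y $ a = 0" | "y $ a > 0"
      by linarith
    then show "y $ a * C a \<le> y $ a * (C b + e)"
      by cases (simp_all add: near_min mult_left_mono)
  qed
  also have "\<dots> = g * (C b + e)"
    using y by (simp add: simplex_mass_def sum_distrib_right[symmetric])
  finally have upper: "(\<Sum>a\<in>UNIV. y $ a * C a) \<le> g * (C b + e)" .
  have "g * C b = (\<Sum>a\<in>UNIV. z $ a * C b)"
    using z by (simp add: simplex_mass_def sum_distrib_right[symmetric])
  also have "\<dots> \<le> (\<Sum>a\<in>UNIV. z $ a * C a)"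
    using z b by (intro sum_mono) (simp add: simplex_mass_def mult_left_mono)
  finally have lower: "g * C b \<le> (\<Sum>a\<in>UNIV. z $ a * C a)" .
  show ?thesis
    using upper lower by (simp add: left_diff_distrib sum_subtractf distrib_left)
qed

lemma interim_cost_gap_le:
  assumes game: "basic_game p c" and info: "info_structure \<gamma> T \<pi>"
    and eq: "bayes_wardrop_eq p c \<gamma> T \<pi> \<alpha> yh"
    and zh: "interim_profile \<gamma> T zh" and t: "t \<in> T k"
  shows "(\<Sum>a\<in>UNIV. (yh k t $ a - zh k t $ a) * interim_cost p c T \<pi> yh k t a)
    \<le> \<gamma> k * (\<alpha> * type_prob p T \<pi> k t)"
proof (cases "type_prob p T \<pi> k t > 0")
  case True
  with eq zh t show ?thesis
    by (intro simplex_mass_cost_gap_le) (auto simp: bayes_wardrop_eq_def interim_profile_def)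
next
  case False
  then have "type_prob p T \<pi> k t = 0"
    using type_prob_nonneg[OF game info] by (simp add: order_less_le)
  then show ?thesis
    using interim_cost_eq_0_if_type_prob_eq_0[OF game info] by simp
qed

lemma weighted_cost_gap_by_population:
  "w * (\<Sum>a\<in>UNIV. C a * (total_flow yh \<tau> $ a - total_flow zh \<tau> $ a))
    = (\<Sum>k\<in>UNIV. \<Sum>a\<in>UNIV. w * C a * (yh k (\<tau> k) $ a - zh k (\<tau> k) $ a))"
proof -
  have "total_flow yh \<tau> $ a - total_flow zh \<tau> $ a = (\<Sum>k\<in>UNIV. yh k (\<tau> k) $ a - zh k (\<tau> k) $ a)"
    for a
    by (simp add: total_flow_def sum_subtractf)
  then have "w * (\<Sum>a\<in>UNIV. C a * (total_flow yh \<tau> $ a - total_flow zh \<tau> $ a))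
      = (\<Sum>a\<in>UNIV. \<Sum>k\<in>UNIV. w * C a * (yh k (\<tau> k) $ a - zh k (\<tau> k) $ a))"
    by (simp add: sum_distrib_left mult.assoc)
  also have "\<dots> = (\<Sum>k\<in>UNIV. \<Sum>a\<in>UNIV. w * C a * (yh k (\<tau> k) $ a - zh k (\<tau> k) $ a))"
    by (rule sum.swap)
  finally show ?thesis .
qed

lemma nested_sum_pull_out_factor:
  fixes X :: "'s \<Rightarrow> 'u \<Rightarrow> 'a \<Rightarrow> real"
  shows "(\<Sum>\<theta>\<in>S. \<Sum>\<tau>\<in>B. \<Sum>a\<in>A. X \<theta> \<tau> a * e a) = (\<Sum>a\<in>A. e a * (\<Sum>\<theta>\<in>S. \<Sum>\<tau>\<in>B. X \<theta> \<tau> a))"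
proof -
  have "(\<Sum>\<theta>\<in>S. \<Sum>\<tau>\<in>B. \<Sum>a\<in>A. X \<theta> \<tau> a * e a) = (\<Sum>\<theta>\<in>S. \<Sum>a\<in>A. \<Sum>\<tau>\<in>B. X \<theta> \<tau> a * e a)"
    by (intro sum.cong refl sum.swap)
  also have "\<dots> = (\<Sum>a\<in>A. \<Sum>\<theta>\<in>S. \<Sum>\<tau>\<in>B. X \<theta> \<tau> a * e a)"
    by (rule sum.swap)
  finally show ?thesis
    by (simp add: sum_distrib_left mult.commute)
qed

lemma Phi_pi_diff_le_interim_cost_gap:
  assumes game: "basic_game p c" and pot: "is_potential c \<Phi>"
    and convex: "\<forall>\<theta>. convex_on (simplex_mass 1) (\<Phi> \<theta>)" and info: "info_structure \<gamma> T \<pi>"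
    and yh: "interim_profile \<gamma> T yh" and zh: "interim_profile \<gamma> T zh"
  shows "Phi_pi p T \<pi> \<Phi> yh - Phi_pi p T \<pi> \<Phi> zh \<le>
    (\<Sum>k\<in>UNIV. \<Sum>t\<in>T k. \<Sum>a\<in>UNIV. (yh k t $ a - zh k t $ a) * interim_cost p c T \<pi> yh k t a)"
proof -
  define w where "w \<theta> \<tau> = p \<theta> * \<pi> \<theta> \<tau>" for \<theta> \<tau>
  define X where "X \<theta> \<tau> a = w \<theta> \<tau> * c a (total_flow yh \<tau>) \<theta>" for \<theta> \<tau> a
  define d where "d k t a = yh k t $ a - zh k t $ a" for k t a
  have fin: "\<And>k. finite (T k)"
    using info by (simp add: info_structure_def)
  have "Phi_pi p T \<pi> \<Phi> yh - Phi_pi p T \<pi> \<Phi> zh = (\<Sum>\<theta>\<in>UNIV. \<Sum>\<tau>\<in>PiE UNIV T.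
      w \<theta> \<tau> * (\<Phi> \<theta> (total_flow yh \<tau>) - \<Phi> \<theta> (total_flow zh \<tau>)))"
    by (simp add: Phi_pi_def w_def sum_subtractf right_diff_distrib)
  also have "\<dots> \<le> (\<Sum>\<theta>\<in>UNIV. \<Sum>\<tau>\<in>PiE UNIV T. w \<theta> \<tau> * (\<Sum>a\<in>UNIV.
      c a (total_flow yh \<tau>) \<theta> * (total_flow yh \<tau> $ a - total_flow zh \<tau> $ a)))"
    using game info yh zh convex unfolding w_def
    by (intro sum_mono mult_left_mono potential_above_linearization[OF pot]
        total_flow_in_simplex prior_weight_nonneg) auto
  also have "\<dots> = (\<Sum>\<theta>\<in>UNIV. \<Sum>\<tau>\<in>PiE UNIV T. \<Sum>k\<in>UNIV. \<Sum>a\<in>UNIV. X \<theta> \<tau> a * d k (\<tau> k) a)"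
    unfolding X_def d_def by (simp only: weighted_cost_gap_by_population)
  also have "\<dots> = (\<Sum>k\<in>UNIV. \<Sum>t\<in>T k. \<Sum>\<theta>\<in>UNIV. \<Sum>\<tau>\<in>{\<tau>\<in>PiE UNIV T. \<tau> k = t}.
      \<Sum>a\<in>UNIV. X \<theta> \<tau> a * d k t a)"
    using fin by (rule sum_PiE_regroup_by_type)
  also have "\<dots> = (\<Sum>k\<in>UNIV. \<Sum>t\<in>T k. \<Sum>a\<in>UNIV. d k t a * interim_cost p c T \<pi> yh k t a)"
    unfolding nested_sum_pull_out_factor by (simp add: interim_cost_def X_def w_def)
  finally show ?thesis
    by (simp add: d_def)
qed

theorem mainTheorem6:
  fixes p :: "'s::finite \<Rightarrow> real"
    and c :: "'a::finite \<Rightarrow> real ^ 'a \<Rightarrow> 's \<Rightarrow> real"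
    and \<Phi> :: "'s \<Rightarrow> real ^ 'a \<Rightarrow> real"
    and \<gamma> :: "'k::finite \<Rightarrow> real"
    and T :: "'k \<Rightarrow> 't set"
    and \<pi> :: "'s \<Rightarrow> ('k \<Rightarrow> 't) \<Rightarrow> real"
    and \<alpha> :: real
    and yh :: "'k \<Rightarrow> 't \<Rightarrow> real ^ 'a"
  assumes "basic_game p c"
    and "is_potential c \<Phi>"
    and "\<forall>\<theta>. convex_on (simplex_mass 1) (\<Phi> \<theta>)"
    and "info_structure \<gamma> T \<pi>"
    and "\<alpha> > 0"
    and "bayes_wardrop_eq p c \<gamma> T \<pi> \<alpha> yh"
  shows "\<forall>zh. interim_profile \<gamma> T zh \<longrightarrow> Phi_pi p T \<pi> \<Phi> yh \<le> Phi_pi p T \<pi> \<Phi> zh + \<alpha>"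
proof (intro allI impI)
  fix zh :: "'k \<Rightarrow> 't \<Rightarrow> real ^ 'a"
  assume zh: "interim_profile \<gamma> T zh"
  have yh: "interim_profile \<gamma> T yh"
    using assms(6) by (simp add: bayes_wardrop_eq_def)
  have "Phi_pi p T \<pi> \<Phi> yh - Phi_pi p T \<pi> \<Phi> zh \<le>
      (\<Sum>k\<in>UNIV. \<Sum>t\<in>T k. \<Sum>a\<in>UNIV. (yh k t $ a - zh k t $ a) * interim_cost p c T \<pi> yh k t a)"
    using Phi_pi_diff_le_interim_cost_gap[OF assms(1-4) yh zh] .
  also have "\<dots> \<le> (\<Sum>k\<in>UNIV. \<Sum>t\<in>T k. \<gamma> k * (\<alpha> * type_prob p T \<pi> k t))"
    by (intro sum_mono interim_cost_gap_le[OF assms(1,4,6) zh])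
  also have "\<dots> = (\<Sum>k\<in>UNIV. \<gamma> k * \<alpha> * (\<Sum>t\<in>T k. type_prob p T \<pi> k t))"
    by (simp add: sum_distrib_left mult.assoc)
  also have "\<dots> = \<alpha>"
    using assms(4) by (simp add: sum_type_prob[OF assms(1,4)] info_structure_def
        sum_distrib_right[symmetric])
  finally show "Phi_pi p T \<pi> \<Phi> yh \<le> Phi_pi p T \<pi> \<Phi> zh + \<alpha>"
    by simp
qed

end
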